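(* Let $E$ be a finite directed graph and $KE$ its path algebra. Then (i) $\mathrm{GKdim}(KE)=0$ if and only if $KE$ is finite-dimensional; (ii) if $0\neq\mathrm{GKdim}(KE)<\infty$, then $\mathrm{h}_{\mathrm{alg}}(KE)=0$ and $KE$ is infinite-dimensional.
   Context: A finite directed graph $E=(E^0,E^1,s,r)$ has finitely many vertices and edges, with source and range maps $s,r:E^1\to E^0$. Paths are finite sequences $e_1\cdots e_n$ of edges with $r(e_i)=s(e_{i+1})$; vertices are paths of length $0$. The path algebra $KE$ over a field $K$ has basis all paths with concatenation product (zero when not composable); its standard filtration $V_n$ is the span of paths of length $\le n$. $\mathrm{h}_{\mathrm{alg}}(KE)=0$ if $KE$ is finite-dimensional and $\limsup_n\frac1n\log\dim(V_n/V_{n-1})$ otherwise. $\mathrm{GKdim}(A)=\limsup_{n}\log\dim(V^n)/\log n$ for a finite-dimensional generating subspace $V$ of the algebra $A$, where $V^n$ is the span of products of at most $n$ elements of $V$ (and $\mathrm{GKdim}(A)=\infty$ if the growth is not polynomially bounded). *)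

theory Defs
  imports "HOL-Library.Function_Algebras" "HOL-Library.Liminf_Limsup" "HOL-Library.Extended_Real"
    Complex_Main "Graph_Theory.Digraph"
begin

text \<open>Finite directed graph E = (E^0, E^1, s, r): we use the Graph_Theory record
  pre_digraph with verts = E^0, arcs = E^1, tail = s, head = r, and the locale
  assumption fin_digraph (finitely many vertices and edges, loops and multiple
  edges allowed).

  A path is represented as a pair (v, es): start vertex v and a list of edges es.
  The vertex v (path of length 0) is (v, []).\<close>

type_synonym ('v,'e) gpath = "'v \<times> 'e list"

definition is_path :: "('v,'e) pre_digraph \<Rightarrow> ('v,'e) gpath \<Rightarrow> bool" where
  "is_path G p \<longleftrightarrow> fst p \<in> verts G \<and> set (snd p) \<subseteq> arcs G
     \<and> (snd p \<noteq> [] \<longrightarrow> tail G (hd (snd p)) = fst p)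
     \<and> (\<forall>i. Suc i < length (snd p) \<longrightarrow> head G (snd p ! i) = tail G (snd p ! Suc i))"

definition path_len :: "('v,'e) gpath \<Rightarrow> nat" where
  "path_len p = length (snd p)"

definition path_end :: "('v,'e) pre_digraph \<Rightarrow> ('v,'e) gpath \<Rightarrow> 'v" where
  "path_end G p = (if snd p = [] then fst p else head G (last (snd p)))"

text \<open>Concatenation of paths; None stands for the product being zero.\<close>
definition path_concat :: "('v,'e) pre_digraph \<Rightarrow> ('v,'e) gpath \<Rightarrow> ('v,'e) gpath \<Rightarrow> ('v,'e) gpath option" where
  "path_concat G p q = (if path_end G p = fst q then Some (fst p, snd p @ snd q) else None)"

text \<open>The path algebra KE: K-linear combinations of paths, i.e. finitely supported
  functions from paths to K (supported on paths of G).\<close>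

definition pscale :: "'k::field \<Rightarrow> (('v,'e) gpath \<Rightarrow> 'k) \<Rightarrow> (('v,'e) gpath \<Rightarrow> 'k)" where
  "pscale c f = (\<lambda>x. c * f x)"

definition supp :: "('a \<Rightarrow> 'k::zero) \<Rightarrow> 'a set" where
  "supp f = {x. f x \<noteq> 0}"

definition path_algebra :: "'k::field itself \<Rightarrow> ('v,'e) pre_digraph \<Rightarrow> (('v,'e) gpath \<Rightarrow> 'k) set" where
  "path_algebra _ G = {f. finite (supp f) \<and> supp f \<subseteq> {p. is_path G p}}"

definition basis_elt :: "'k::field itself \<Rightarrow> ('v,'e) gpath \<Rightarrow> (('v,'e) gpath \<Rightarrow> 'k)" where
  "basis_elt _ p = (\<lambda>q. if q = p then 1 else 0)"

definition pmult :: "('v,'e) pre_digraph \<Rightarrow> (('v,'e) gpath \<Rightarrow> 'k::field) \<Rightarrow> (('v,'e) gpath \<Rightarrow> 'k) \<Rightarrow> (('v,'e) gpath \<Rightarrow> 'k)" where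
  "pmult G f g = (\<lambda>p. \<Sum>(q,q') \<in> {(q,q'). q \<in> supp f \<and> q' \<in> supp g \<and> path_concat G q q' = Some p}. f q * g q')"

text \<open>The unit of KE (the sum of all vertices; E^0 is finite).\<close>
definition punit :: "'k::field itself \<Rightarrow> ('v,'e) pre_digraph \<Rightarrow> (('v,'e) gpath \<Rightarrow> 'k)" where
  "punit _ G = (\<lambda>p. if snd p = [] \<and> fst p \<in> verts G then 1 else 0)"

fun pprod :: "'k::field itself \<Rightarrow> ('v,'e) pre_digraph \<Rightarrow> (('v,'e) gpath \<Rightarrow> 'k) list \<Rightarrow> (('v,'e) gpath \<Rightarrow> 'k)" where
  "pprod K G [] = punit K G"
| "pprod K G (x # xs) = pmult G x (pprod K G xs)"

abbreviation kspan :: "(('v,'e) gpath \<Rightarrow> 'k::field) set \<Rightarrow> (('v,'e) gpath \<Rightarrow> 'k) set" where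
  "kspan S \<equiv> module.span pscale S"

abbreviation kdim :: "(('v,'e) gpath \<Rightarrow> 'k::field) set \<Rightarrow> nat" where
  "kdim S \<equiv> vector_space.dim pscale S"

definition fin_dim :: "(('v,'e) gpath \<Rightarrow> 'k::field) set \<Rightarrow> bool" where
  "fin_dim S \<longleftrightarrow> (\<exists>B. finite B \<and> S \<subseteq> kspan B)"

definition path_algebra_fin_dim :: "'k::field itself \<Rightarrow> ('v,'e) pre_digraph \<Rightarrow> bool" where
  "path_algebra_fin_dim K G \<longleftrightarrow> fin_dim (path_algebra K G)"

definition subspace_pow :: "'k::field itself \<Rightarrow> ('v,'e) pre_digraph \<Rightarrow> (('v,'e) gpath \<Rightarrow> 'k) set \<Rightarrow> nat \<Rightarrow> (('v,'e) gpath \<Rightarrow> 'k) set" where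
  "subspace_pow K G V n = kspan {pprod K G xs | xs. length xs \<le> n \<and> set xs \<subseteq> V}"

definition fd_generating :: "'k::field itself \<Rightarrow> ('v,'e) pre_digraph \<Rightarrow> (('v,'e) gpath \<Rightarrow> 'k) set \<Rightarrow> bool" where
  "fd_generating K G V \<longleftrightarrow> module.subspace pscale V \<and> V \<subseteq> path_algebra K G \<and> fin_dim V
     \<and> (\<Union>n. subspace_pow K G V n) = path_algebra K G"

definition GK_wrt :: "'k::field itself \<Rightarrow> ('v,'e) pre_digraph \<Rightarrow> (('v,'e) gpath \<Rightarrow> 'k) set \<Rightarrow> ereal" where
  "GK_wrt K G V = limsup (\<lambda>n. ereal (ln (real (kdim (subspace_pow K G V n))) / ln (real n)))"

definition GKdim :: "'k::field itself \<Rightarrow> ('v,'e) pre_digraph \<Rightarrow> ereal" where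
  "GKdim K G = GK_wrt K G (SOME V. fd_generating K G V)"

definition std_filt :: "'k::field itself \<Rightarrow> ('v,'e) pre_digraph \<Rightarrow> nat \<Rightarrow> (('v,'e) gpath \<Rightarrow> 'k) set" where
  "std_filt K G n = kspan {basis_elt K p | p. is_path G p \<and> path_len p \<le> n}"

definition filt_quot_dim :: "'k::field itself \<Rightarrow> ('v,'e) pre_digraph \<Rightarrow> nat \<Rightarrow> nat" where
  "filt_quot_dim K G n = (if n = 0 then kdim (std_filt K G 0)
      else kdim (std_filt K G n) - kdim (std_filt K G (n - 1)))"

definition h_alg :: "'k::field itself \<Rightarrow> ('v,'e) pre_digraph \<Rightarrow> ereal" where
  "h_alg K G = (if path_algebra_fin_dim K G then 0
     else limsup (\<lambda>n. ereal (ln (real (filt_quot_dim K G n)) / real n)))"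

end

theory Submission
  imports Defs "HOL-Real_Asymp.Real_Asymp"
begin

text \<open>
  The span V_1 of the vertices and edges generates KE, and every finite-dimensional
  generating subspace V is comparable with the standard filtration: V \<subseteq> V_M and
  V_1 \<subseteq> V^k for some M and k, hence V_n \<subseteq> V^(k(n+1)) and V^m \<subseteq> V_(Mm).
  If KE is finite-dimensional, dim V^n is bounded and GKdim KE = 0. Otherwise there are
  paths of every length; the n + 1 prefixes of a path of length n are linearly independent
  in V_n, so dim V^(kn) \<ge> n and GKdim KE \<ge> 1. Finally
  dim (V_n / V_(n-1)) \<le> dim V^(k(n+1)) grows polynomially when GKdim KE < \<infinity>,
  so its exponential growth rate h_alg KE vanishes.
\<close>

interpretation ps: vector_space "pscale :: 'k::field \<Rightarrow> (('v,'e) gpath \<Rightarrow> 'k) \<Rightarrow> _"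
  by unfold_locales (auto simp: pscale_def fun_eq_iff algebra_simps)

lemma (in vector_space) dim_mono_finite_span:
  assumes "A \<subseteq> span B" "B \<subseteq> span F" "finite F"
  shows "dim A \<le> dim B"
proof -
  obtain C where C: "C \<subseteq> B" "independent C" "B \<subseteq> span C" "card C = dim B"
    by (rule basis_exists)
  have "finite C"
    using independent_span_bound[OF assms(3) C(2)] C(1) assms(2) by blast
  moreover have "A \<subseteq> span C"
    using assms(1) span_minimal[OF C(3) subspace_span] by blast
  ultimately show ?thesis
    using dim_le_card C(4) by metis
qed

lemma finite_subset_UN_mono:
  fixes B :: "nat \<Rightarrow> 'a set"
  assumes "finite A" "A \<subseteq> (\<Union>n. B n)" "mono B"
  obtains n where "A \<subseteq> B n"
proof -
  obtain n where "A \<subseteq> (\<Union>i<n. B i)"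
    using finite_countable_subset[OF assms(1,2)] .
  moreover have "B i \<subseteq> B n" if "i < n" for i
    using that assms(3) by (simp add: monoD)
  ultimately show ?thesis
    using that by blast
qed

lemma sum_apply: "(sum f A) x = (\<Sum>a\<in>A. f a x)"
  by (induction A rule: infinite_finite_induct) auto

subsection \<open>Growth rates of integer sequences\<close>

lemma limsup_ereal_eq_if_tendsto:
  "(f \<longlongrightarrow> l) sequentially \<Longrightarrow> limsup (\<lambda>n. ereal (f n)) = ereal l"
  by (intro lim_imp_Limsup) simp_all

lemma ln_of_nat_nonneg: "0 \<le> ln (real (m::nat))"
  by (cases "m = 0") auto

lemma ln_of_nat_mono: "(m::nat) \<le> M \<Longrightarrow> 0 < M \<Longrightarrow> ln (real m) \<le> ln (real M)"
  by (cases "m = 0") auto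

lemma limsup_ln_ratio_eq_0_if_bounded:
  fixes d :: "nat \<Rightarrow> nat"
  assumes "\<And>n. d n \<le> C"
  shows "limsup (\<lambda>n. ereal (ln (real (d n)) / ln (real n))) = 0"
proof -
  have "(\<lambda>n. ln (real (d n)) / ln (real n)) \<longlonglongrightarrow> 0"
  proof (rule tendsto_sandwich[OF _ _ tendsto_const])
    show "\<forall>\<^sub>F n in sequentially. 0 \<le> ln (real (d n)) / ln (real n)"
      by (intro always_eventually allI divide_nonneg_nonneg ln_of_nat_nonneg)
    show "\<forall>\<^sub>F n in sequentially. ln (real (d n)) / ln (real n) \<le> ln (real (Suc C)) / ln (real n)"
    proof (rule eventually_sequentiallyI[of 2])
      fix n :: nat assume "2 \<le> n"
      moreover have "ln (real (d n)) \<le> ln (real (Suc C))"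
        using assms[of n] by (intro ln_of_nat_mono) auto
      ultimately show "ln (real (d n)) / ln (real n) \<le> ln (real (Suc C)) / ln (real n)"
        by (simp add: divide_right_mono)
    qed
    show "(\<lambda>n. ln (real (Suc C)) / ln (real n)) \<longlonglongrightarrow> 0"
      by real_asymp
  qed
  then show ?thesis
    by (simp add: limsup_ereal_eq_if_tendsto zero_ereal_def)
qed

lemma limsup_ln_ratio_ge_1:
  fixes d :: "nat \<Rightarrow> nat"
  assumes k: "k > 0" and "mono d" and d: "\<And>n. n \<le> d (k * n)"
  shows "1 \<le> limsup (\<lambda>n. ereal (ln (real (d n)) / ln (real n)))"
proof -
  have "(\<lambda>m. ln (real m / real k - 1) / ln (real m)) \<longlonglongrightarrow> 1"
    using k by real_asymp
  then have "1 = limsup (\<lambda>m. ereal (ln (real m / real k - 1) / ln (real m)))"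
    by (simp add: limsup_ereal_eq_if_tendsto one_ereal_def)
  also have "\<dots> \<le> limsup (\<lambda>m. ereal (ln (real (d m)) / ln (real m)))"
  proof (intro Limsup_mono eventually_sequentiallyI[of "k + 2"])
    fix m assume m: "k + 2 \<le> m"
    have "m < k * (m div k) + k"
      using mult_div_mod_eq[of k m] mod_less_divisor[OF k, of m] by linarith
    then have "real m < real k * real (m div k) + real k"
      by (metis of_nat_add of_nat_less_iff of_nat_mult)
    then have "real m / real k - 1 < real (m div k)"
      using k by (simp add: field_simps)
    also have "m div k \<le> d m"
      using d[of "m div k"] \<open>mono d\<close>[THEN monoD, of "k * (m div k)" m] by simp
    finally have "ln (real m / real k - 1) \<le> ln (real (d m))"
      using m k by (intro ln_mono) (auto simp: field_simps)
    moreover have "0 < ln (real m)"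
      using m by simp
    ultimately show "ereal (ln (real m / real k - 1) / ln (real m)) \<le> ereal (ln (real (d m)) / ln (real m))"
      by (simp add: divide_right_mono)
  qed
  finally show ?thesis .
qed

lemma limsup_ln_over_n_eq_0:
  fixes d q :: "nat \<Rightarrow> nat"
  assumes fin: "limsup (\<lambda>n. ereal (ln (real (d n)) / ln (real n))) < \<infinity>"
    and k: "k > 0" and q: "\<And>n. q n \<le> d (k * (n + 1))"
  shows "limsup (\<lambda>n. ereal (ln (real (q n)) / real n)) = 0"
proof -
  obtain D :: nat where "limsup (\<lambda>n. ereal (ln (real (d n)) / ln (real n))) < ereal (real D)"
    using fin less_PInf_Ex_of_nat by auto
  then have "\<forall>\<^sub>F m in sequentially. ereal (ln (real (d m)) / ln (real m)) < ereal (real D)"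
    by (rule Limsup_lessD)
  then obtain M where M: "\<And>m. M \<le> m \<Longrightarrow> ln (real (d m)) / ln (real m) < real D"
    by (auto simp: eventually_sequentially)
  have "(\<lambda>n. ln (real (q n)) / real n) \<longlonglongrightarrow> 0"
  proof (rule tendsto_sandwich[OF _ _ tendsto_const])
    show "\<forall>\<^sub>F n in sequentially. 0 \<le> ln (real (q n)) / real n"
      by (intro always_eventually allI divide_nonneg_nonneg ln_of_nat_nonneg) simp
    show "\<forall>\<^sub>F n in sequentially. ln (real (q n)) / real n \<le> real D * ln (real k * (real n + 1)) / real n"
    proof (rule eventually_sequentiallyI[of "M + 2"])
      fix n assume n: "M + 2 \<le> n"
      let ?m = "k * (n + 1)"
      have "n + 1 \<le> ?m"
        using mult_le_mono1[of 1 k "n + 1"] k by simp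
      then have "M \<le> ?m" "1 < ?m"
        using n by simp_all
      have ln_m: "0 < ln (real ?m)"
        using \<open>1 < ?m\<close> by (intro ln_gt_zero) linarith
      then have "ln (real (d ?m)) \<le> real D * ln (real ?m)"
        using M[OF \<open>M \<le> ?m\<close>] by (simp add: divide_less_eq)
      have "ln (real (q n)) \<le> real D * ln (real ?m)"
      proof (cases "q n = 0")
        case False
        then have "ln (real (q n)) \<le> ln (real (d ?m))"
          using q[of n] by (intro ln_of_nat_mono) auto
        with \<open>ln (real (d ?m)) \<le> real D * ln (real ?m)\<close> show ?thesis
          by linarith
      qed (use ln_m in simp)
      also have "real ?m = real k * (real n + 1)"
        by (simp add: algebra_simps)
      finally have "ln (real (q n)) \<le> real D * ln (real k * (real n + 1))" .
      then show "ln (real (q n)) / real n \<le> real D * ln (real k * (real n + 1)) / real n"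
        by (simp add: divide_right_mono)
    qed
    show "(\<lambda>n. real D * ln (real k * (real n + 1)) / real n) \<longlonglongrightarrow> 0"
      using k by real_asymp
  qed
  then show ?thesis
    by (simp add: limsup_ereal_eq_if_tendsto zero_ereal_def)
qed

subsection \<open>Paths\<close>

lemma is_path_start: "is_path G p \<Longrightarrow> fst p \<in> verts G"
  by (simp add: is_path_def)

lemma is_path_Nil [simp]: "is_path G (v, []) \<longleftrightarrow> v \<in> verts G"
  by (simp add: is_path_def)

lemma is_path_Cons:
  assumes "wf_digraph G"
  shows "is_path G (v, e # es) \<longleftrightarrow> e \<in> arcs G \<and> tail G e = v \<and> is_path G (head G e, es)"
proof
  assume "is_path G (v, e # es)"
  then have links: "\<And>i. Suc i < length (e # es) \<Longrightarrow> head G ((e # es) ! i) = tail G ((e # es) ! Suc i)"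
    and arcs: "set (e # es) \<subseteq> arcs G" and "tail G e = v"
    by (auto simp: is_path_def)
  moreover have "head G e \<in> verts G"
    using arcs assms by (simp add: wf_digraph.head_in_verts)
  moreover have "tail G (hd es) = head G e" if "es \<noteq> []"
    using links[of 0] that by (simp add: hd_conv_nth)
  moreover have "head G (es ! i) = tail G (es ! Suc i)" if "Suc i < length es" for i
    using links[of "Suc i"] that by simp
  ultimately show "e \<in> arcs G \<and> tail G e = v \<and> is_path G (head G e, es)"
    by (simp add: is_path_def)
next
  assume "e \<in> arcs G \<and> tail G e = v \<and> is_path G (head G e, es)"
  then show "is_path G (v, e # es)"
    using assms by (auto simp: is_path_def wf_digraph.tail_in_verts nth_Cons hd_conv_nth split: nat.split)
qed

lemma path_end_Nil [simp]: "path_end G (v, []) = v"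
  by (simp add: path_end_def)

lemma path_end_Cons [simp]: "path_end G (v, e # es) = path_end G (head G e, es)"
  by (simp add: path_end_def)

lemma is_path_append:
  assumes "wf_digraph G"
  shows "is_path G (v, xs @ ys) \<longleftrightarrow> is_path G (v, xs) \<and> is_path G (path_end G (v, xs), ys)"
  by (induction xs arbitrary: v) (auto simp: is_path_Cons[OF assms] dest: is_path_start)

lemma path_end_in_verts:
  assumes "wf_digraph G" "is_path G p"
  shows "path_end G p \<in> verts G"
  using assms is_path_append[OF assms(1), of "fst p" "snd p" "[]"] by simp

lemma finite_paths:
  assumes "fin_digraph G"
  shows "finite {p. is_path G p \<and> path_len p \<le> n}"
proof (rule finite_subset)
  show "{p. is_path G p \<and> path_len p \<le> n} \<subseteq> verts G \<times> {es. set es \<subseteq> arcs G \<and> length es \<le> n}"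
    by (auto simp: is_path_def path_len_def)
  show "finite (verts G \<times> {es. set es \<subseteq> arcs G \<and> length es \<le> n})"
    using assms by (intro finite_cartesian_product finite_lists_length_le)
      (auto simp: fin_digraph.finite_verts fin_digraph.finite_arcs)
qed

definition ptake :: "nat \<Rightarrow> ('v,'e) gpath \<Rightarrow> ('v,'e) gpath" where
  "ptake i p = (fst p, take i (snd p))"

definition pdrop :: "('v,'e) pre_digraph \<Rightarrow> nat \<Rightarrow> ('v,'e) gpath \<Rightarrow> ('v,'e) gpath" where
  "pdrop G i p = (path_end G (ptake i p), drop i (snd p))"

lemma ptake_pdrop_concat: "path_concat G (ptake i p) (pdrop G i p) = Some p"
  by (simp add: path_concat_def ptake_def pdrop_def)

lemma is_path_ptake_pdrop:
  assumes "wf_digraph G"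
  shows "is_path G p \<longleftrightarrow> is_path G (ptake i p) \<and> is_path G (pdrop G i p)"
  using is_path_append[OF assms, of "fst p" "take i (snd p)" "drop i (snd p)"]
  by (simp add: ptake_def pdrop_def)

lemma length_ptake: "i \<le> length (snd p) \<Longrightarrow> length (snd (ptake i p)) = i"
  by (simp add: ptake_def)

lemma length_pdrop: "length (snd (pdrop G i p)) = length (snd p) - i"
  by (simp add: pdrop_def)

lemma ptake_ptake: "i \<le> j \<Longrightarrow> ptake i (ptake j p) = ptake i p"
  by (simp add: ptake_def min_def)

lemma pdrop_ptake: "i \<le> j \<Longrightarrow> pdrop G i (ptake j p) = ptake (j - i) (pdrop G i p)"
  by (simp add: pdrop_def ptake_def min_def drop_take)

lemma path_end_ptake_pdrop:
  assumes "i + l \<le> length (snd p)"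
  shows "path_end G (ptake l (pdrop G i p)) = path_end G (ptake (i + l) p)"
proof (cases "l = 0")
  case True
  then show ?thesis by (simp add: ptake_def pdrop_def path_end_def)
next
  case False
  then have "l \<le> length (snd p) - i" "snd p \<noteq> []"
    using assms by auto
  then have "last (take l (drop i (snd p))) = snd p ! (i + l - 1)"
    "last (take (i + l) (snd p)) = snd p ! (i + l - 1)"
    using assms False by (simp_all add: last_conv_nth nth_drop min_absorb1)
  then show ?thesis
    using \<open>snd p \<noteq> []\<close> assms False by (simp add: ptake_def pdrop_def path_end_def)
qed

lemma pdrop_pdrop: "i + l \<le> length (snd p) \<Longrightarrow> pdrop G l (pdrop G i p) = pdrop G (i + l) p"
  using path_end_ptake_pdrop[of i l p G] by (simp add: pdrop_def add.commute)

subsection \<open>The multiplication of the path algebra\<close>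

lemma pmult_eq_sum_splits:
  "pmult G f g p = (\<Sum>i\<le>length (snd p). f (ptake i p) * g (pdrop G i p))"
proof -
  let ?X = "{(q,q'). q \<in> supp f \<and> q' \<in> supp g \<and> path_concat G q q' = Some p}"
  let ?I = "{i. i \<le> length (snd p) \<and> f (ptake i p) \<noteq> 0 \<and> g (pdrop G i p) \<noteq> 0}"
  let ?split = "\<lambda>i. (ptake i p, pdrop G i p)"
  have X: "?X = ?split ` ?I"
  proof (intro equalityI subsetI)
    fix x assume "x \<in> ?X"
    then obtain q q' where x: "x = (q,q')" "f q \<noteq> 0" "g q' \<noteq> 0"
      and "path_end G q = fst q'" and pq: "p = (fst q, snd q @ snd q')"
      by (auto simp: supp_def path_concat_def split: if_splits)
    then have "?split (length (snd q)) = (q, q')"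
      by (simp add: ptake_def pdrop_def)
    then show "x \<in> ?split ` ?I"
      using x pq by (intro image_eqI[of _ _ "length (snd q)"]) auto
  qed (auto simp: supp_def ptake_pdrop_concat)
  have "inj_on ?split ?I"
    by (rule inj_onI) (metis (no_types, lifting) length_ptake mem_Collect_eq prod.inject)
  then have "pmult G f g p = (\<Sum>i\<in>?I. f (ptake i p) * g (pdrop G i p))"
    by (simp add: pmult_def X sum.reindex)
  also have "\<dots> = (\<Sum>i\<le>length (snd p). f (ptake i p) * g (pdrop G i p))"
    by (rule sum.mono_neutral_left) auto
  finally show ?thesis .
qed

lemma pmult_add_left: "pmult G (f + g) h = pmult G f h + pmult G g h"
  by (simp add: fun_eq_iff pmult_eq_sum_splits sum.distrib distrib_right)

lemma pmult_add_right: "pmult G h (f + g) = pmult G h f + pmult G h g"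
  by (simp add: fun_eq_iff pmult_eq_sum_splits sum.distrib distrib_left)

lemma pmult_pscale_left: "pmult G (pscale c f) h = pscale c (pmult G f h)"
  by (simp add: fun_eq_iff pmult_eq_sum_splits pscale_def sum_distrib_left mult.assoc)

lemma pmult_pscale_right: "pmult G h (pscale c f) = pscale c (pmult G h f)"
  by (simp add: fun_eq_iff pmult_eq_sum_splits pscale_def sum_distrib_left algebra_simps)

lemma pmult_zero_left [simp]: "pmult G 0 h = 0"
  by (simp add: fun_eq_iff pmult_eq_sum_splits)

lemma pmult_zero_right [simp]: "pmult G h 0 = 0"
  by (simp add: fun_eq_iff pmult_eq_sum_splits)

lemma pmult_assoc:
  fixes f g h :: "('v,'e) gpath \<Rightarrow> 'k::field"
  shows "pmult G (pmult G f g) h = pmult G f (pmult G g h)"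
proof (rule ext)
  fix p :: "('v,'e) gpath"
  let ?n = "length (snd p)"
  \<comment> \<open>both sides sum F i l over the splittings of p into pieces of lengths i, l and the rest\<close>
  define F where "F i l = f (ptake i p) * g (ptake l (pdrop G i p)) * h (pdrop G l (pdrop G i p))"
    for i l
  have "pmult G (pmult G f g) h p
      = (\<Sum>j\<le>?n. (\<Sum>i\<le>j. f (ptake i (ptake j p)) * g (pdrop G i (ptake j p))) * h (pdrop G j p))"
    by (subst pmult_eq_sum_splits, intro sum.cong refl) (simp add: pmult_eq_sum_splits length_ptake)
  also have "\<dots> = (\<Sum>j\<le>?n. \<Sum>i\<le>j. F i (j - i))"
    by (auto simp: sum_distrib_right F_def ptake_ptake pdrop_ptake pdrop_pdrop intro!: sum.cong)
  also have "\<dots> = (\<Sum>(i,l)\<in>{(i,l). i + l \<le> ?n}. F i l)"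
    by (rule sum.triangle_reindex_eq[symmetric])
  also have "{(i,l). i + l \<le> ?n} = Sigma {..?n} (\<lambda>i. {..?n - i})"
    by auto
  also have "(\<Sum>(i,l)\<in>Sigma {..?n} (\<lambda>i. {..?n - i}). F i l) = (\<Sum>i\<le>?n. \<Sum>l\<le>?n - i. F i l)"
    by (rule sum.Sigma[symmetric]) auto
  also have "\<dots> = pmult G f (pmult G g h) p"
    by (auto simp: pmult_eq_sum_splits length_pdrop F_def sum_distrib_left mult.assoc
        intro!: sum.cong)
  finally show "pmult G (pmult G f g) h p = pmult G f (pmult G g h) p" .
qed

lemma supp_basis_elt [simp]: "supp (basis_elt K p) = {p}"
  by (auto simp: supp_def basis_elt_def)

lemma pmult_basis_elt:
  "pmult G (basis_elt K p) (basis_elt K q) =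
     (case path_concat G p q of None \<Rightarrow> 0 | Some r \<Rightarrow> basis_elt K r)"
proof (rule ext)
  fix r
  have "pmult G (basis_elt K p) (basis_elt K q) r =
      (\<Sum>(p', q')\<in>(if path_concat G p q = Some r then {(p, q)} else {}).
         basis_elt K p p' * basis_elt K q q')"
    unfolding pmult_def supp_basis_elt by (rule sum.cong) auto
  then show "pmult G (basis_elt K p) (basis_elt K q) r =
      (case path_concat G p q of None \<Rightarrow> 0 | Some r \<Rightarrow> basis_elt K r) r"
    by (auto simp: basis_elt_def split: option.split)
qed

lemma pmult_basis_elt_arc:
  "pmult G (basis_elt K (v, [e])) (basis_elt K (head G e, es)) = basis_elt K (v, e # es)"
  by (simp add: pmult_basis_elt path_concat_def path_end_def)

lemma pmult_supp:
  assumes "p \<in> supp (pmult G f g)"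
  obtains i where "i \<le> length (snd p)" "ptake i p \<in> supp f" "pdrop G i p \<in> supp g"
proof -
  from assms obtain i where "i \<le> length (snd p)" "f (ptake i p) * g (pdrop G i p) \<noteq> 0"
    unfolding pmult_eq_sum_splits supp_def by (auto elim: sum.not_neutral_contains_not_neutral)
  then show ?thesis
    using that by (auto simp: supp_def)
qed

lemma punit_pmult:
  fixes g :: "('v,'e) gpath \<Rightarrow> 'k::field"
  assumes "g \<in> path_algebra K G"
  shows "pmult G (punit K G) g = g"
proof (rule ext)
  fix p
  have "pmult G (punit K G) g p = punit K G (ptake 0 p) * g (pdrop G 0 p)
      + (\<Sum>i\<in>{..length (snd p)} - {0}. punit K G (ptake i p) * g (pdrop G i p))"
    unfolding pmult_eq_sum_splits by (rule sum.remove) auto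
  also have "(\<Sum>i\<in>{..length (snd p)} - {0}. punit K G (ptake i p) * g (pdrop G i p)) = 0"
    by (rule sum.neutral) (auto simp: punit_def ptake_def)
  also have "punit K G (ptake 0 p) * g (pdrop G 0 p) = g p"
    using assms by (cases "g p = 0")
      (auto simp: punit_def ptake_def pdrop_def path_algebra_def supp_def is_path_def)
  finally show "pmult G (punit K G) g p = g p"
    by simp
qed

lemma pmult_punit:
  fixes g :: "('v,'e) gpath \<Rightarrow> 'k::field"
  assumes "g \<in> path_algebra K G" "wf_digraph G"
  shows "pmult G g (punit K G) = g"
proof (rule ext)
  fix p :: "('v,'e) gpath"
  let ?n = "length (snd p)"
  have "pmult G g (punit K G) p = g (ptake ?n p) * punit K G (pdrop G ?n p)
      + (\<Sum>i\<in>{..?n} - {?n}. g (ptake i p) * punit K G (pdrop G i p))"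
    unfolding pmult_eq_sum_splits by (rule sum.remove) auto
  also have "(\<Sum>i\<in>{..?n} - {?n}. g (ptake i p) * punit K G (pdrop G i p)) = 0"
    by (rule sum.neutral) (auto simp: punit_def pdrop_def)
  also have "g (ptake ?n p) * punit K G (pdrop G ?n p) = g p"
  proof (cases "g p = 0")
    case False
    then have "is_path G p"
      using assms(1) by (auto simp: path_algebra_def supp_def)
    then have "path_end G p \<in> verts G"
      using assms(2) path_end_in_verts by blast
    then show ?thesis
      by (simp add: ptake_def pdrop_def punit_def)
  qed (simp add: ptake_def)
  finally show "pmult G g (punit K G) p = g p"
    by simp
qed

subsection \<open>The standard filtration\<close>

lemma supp_add: "supp (f + g) \<subseteq> supp f \<union> supp (g :: 'a \<Rightarrow> 'b::monoid_add)"
  by (auto simp: supp_def)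

lemma supp_pscale: "supp (pscale c f) \<subseteq> supp f"
  by (auto simp: supp_def pscale_def)

lemma in_kspan_basis_elt_supp:
  fixes f :: "('v,'e) gpath \<Rightarrow> 'k::field"
  assumes "finite (supp f)"
  shows "f \<in> kspan (basis_elt K ` supp f)"
proof -
  have "(\<Sum>p\<in>supp f. pscale (f p) (basis_elt K p)) x = (\<Sum>p\<in>supp f. if p = x then f p else 0)"
    for x by (auto simp: sum_apply pscale_def basis_elt_def intro!: sum.cong)
  then have "f = (\<Sum>p\<in>supp f. pscale (f p) (basis_elt K p))"
    using assms by (auto simp: fun_eq_iff supp_def)
  also have "\<dots> \<in> kspan (basis_elt K ` supp f)"
    by (intro ps.span_sum ps.span_scale ps.span_base) auto
  finally show ?thesis .
qed

lemma std_filt_eq: "std_filt K G n = {f \<in> path_algebra K G. \<forall>p\<in>supp f. path_len p \<le> n}"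
  (is "_ = ?S")
proof
  have "ps.subspace ?S"
  proof (rule ps.subspaceI)
    show "0 \<in> ?S"
      by (simp add: path_algebra_def supp_def)
    show "x + y \<in> ?S" if "x \<in> ?S" "y \<in> ?S" for x y
      using that supp_add[of x y] by (auto simp: path_algebra_def intro: finite_subset)
    show "pscale c x \<in> ?S" if "x \<in> ?S" for c x
      using that supp_pscale[of c x] by (auto simp: path_algebra_def intro: finite_subset)
  qed
  then show "std_filt K G n \<subseteq> ?S"
    unfolding std_filt_def by (rule ps.span_minimal[rotated]) (auto simp: path_algebra_def)
  show "?S \<subseteq> std_filt K G n"
  proof
    fix f assume f: "f \<in> ?S"
    then have "f \<in> kspan (basis_elt K ` supp f)"
      by (intro in_kspan_basis_elt_supp) (simp add: path_algebra_def)
    also have "\<dots> \<subseteq> std_filt K G n"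
      unfolding std_filt_def using f by (intro ps.span_mono) (auto simp: path_algebra_def)
    finally show "f \<in> std_filt K G n" .
  qed
qed

lemma mono_std_filt: "mono (std_filt K G)"
  unfolding std_filt_def by (intro monoI ps.span_mono) (blast intro: le_trans)

lemma basis_elt_mem_std_filt:
  "is_path G p \<Longrightarrow> path_len p \<le> n \<Longrightarrow> basis_elt K p \<in> std_filt K G n"
  unfolding std_filt_def by (rule ps.span_base) blast

lemma path_algebra_eq_UN_std_filt: "path_algebra K G = (\<Union>n. std_filt K G n)"
proof
  show "path_algebra K G \<subseteq> (\<Union>n. std_filt K G n)"
  proof
    fix f assume f: "f \<in> path_algebra K G"
    then have "finite (path_len ` supp f)"
      by (simp add: path_algebra_def)
    then obtain n where "\<forall>p\<in>supp f. path_len p \<le> n"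
      using finite_nat_set_iff_bounded_le by auto
    then show "f \<in> (\<Union>n. std_filt K G n)"
      using f by (auto simp: std_filt_eq)
  qed
qed (auto simp: std_filt_eq)

lemma pmult_mem_std_filt:
  assumes G: "fin_digraph G" and "f \<in> std_filt K G a" "g \<in> std_filt K G b"
  shows "pmult G f g \<in> std_filt K G (a + b)"
proof -
  have paths: "supp (pmult G f g) \<subseteq> {p. is_path G p \<and> path_len p \<le> a + b}"
  proof (intro subsetI CollectI)
    fix p assume "p \<in> supp (pmult G f g)"
    obtain i where i: "i \<le> length (snd p)" "ptake i p \<in> supp f" "pdrop G i p \<in> supp g"
      using \<open>p \<in> supp (pmult G f g)\<close> by (rule pmult_supp)
    then have "is_path G (ptake i p)" "is_path G (pdrop G i p)"
      "path_len (ptake i p) \<le> a" "path_len (pdrop G i p) \<le> b"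
      using assms(2,3) by (auto simp: std_filt_eq path_algebra_def)
    moreover have "path_len p = path_len (ptake i p) + path_len (pdrop G i p)"
      using i(1) by (simp add: path_len_def ptake_def pdrop_def)
    ultimately show "is_path G p \<and> path_len p \<le> a + b"
      using is_path_ptake_pdrop[OF fin_digraph.axioms(1)[OF G], of p i] by simp
  qed
  then have "finite (supp (pmult G f g))"
    using finite_paths[OF G] by (rule finite_subset)
  with paths show ?thesis
    by (auto simp: std_filt_eq path_algebra_def)
qed

lemma punit_mem_std_filt:
  assumes "fin_digraph G"
  shows "punit K G \<in> std_filt K G 0"
proof -
  have "supp (punit K G) \<subseteq> {p. is_path G p \<and> path_len p \<le> 0}"
    by (auto simp: supp_def punit_def path_len_def)
  then show ?thesis
    using finite_paths[OF assms, of 0] by (auto simp: std_filt_eq path_algebra_def intro: finite_subset)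
qed

lemma inj_basis_elt: "inj (basis_elt K)"
  by (rule injI) (metis basis_elt_def one_neq_zero)

lemma independent_basis_elt:
  fixes K :: "'k::field itself"
  assumes "finite P"
  shows "ps.independent (basis_elt K ` P)"
proof (rule ps.independent_if_scalars_zero)
  fix u x assume sum0: "(\<Sum>x\<in>basis_elt K ` P. pscale (u x) x) = 0" and "x \<in> basis_elt K ` P"
  then obtain q where q: "q \<in> P" "x = basis_elt K q"
    by blast
  have "0 = (\<Sum>y\<in>basis_elt K ` P. pscale (u y) y) q"
    using sum0 by simp
  also have "\<dots> = (\<Sum>q'\<in>P. u (basis_elt K q') * basis_elt K q' q)"
    by (simp add: sum_apply pscale_def sum.reindex[OF inj_on_subset[OF inj_basis_elt]])
  also have "\<dots> = (\<Sum>q'\<in>P. if q' = q then u (basis_elt K q) else 0)"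
    by (rule sum.cong) (auto simp: basis_elt_def)
  also have "\<dots> = u x"
    using q assms by simp
  finally show "u x = 0" ..
qed (use assms in simp)

lemma dim_std_filt:
  assumes "fin_digraph G"
  shows "kdim (std_filt K G n) = card {p. is_path G p \<and> path_len p \<le> n}"
proof -
  let ?P = "{p. is_path G p \<and> path_len p \<le> n}"
  have "std_filt K G n = kspan (basis_elt K ` ?P)"
    unfolding std_filt_def by (rule arg_cong[where f = kspan]) blast
  then have "kdim (std_filt K G n) = card (basis_elt K ` ?P)"
    using ps.dim_span_eq_card_independent[OF independent_basis_elt[OF finite_paths[OF assms]]]
    by simp
  also have "\<dots> = card ?P"
    by (simp add: card_image inj_on_subset[OF inj_basis_elt])
  finally show ?thesis .
qed

lemma exists_long_path:
  assumes "fin_digraph G" "\<not> path_algebra_fin_dim K G"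
  shows "\<exists>p. is_path G p \<and> n \<le> path_len p"
proof (rule ccontr)
  assume "\<not> ?thesis"
  then have "path_algebra K G \<subseteq> std_filt K G n"
    by (fastforce simp: std_filt_eq path_algebra_def)
  also have "\<dots> = kspan {basis_elt K p |p. is_path G p \<and> path_len p \<le> n}"
    by (simp add: std_filt_def)
  moreover have "finite {basis_elt K p |p. is_path G p \<and> path_len p \<le> n}"
    using finite_paths[OF assms(1)] by (rule finite_image_set)
  ultimately show False
    using assms(2) by (auto simp: path_algebra_fin_dim_def fin_dim_def)
qed

lemma card_paths_ge:
  assumes "fin_digraph G" "\<not> path_algebra_fin_dim K G"
  shows "n + 1 \<le> card {p. is_path G p \<and> path_len p \<le> n}"
proof -
  obtain p where p: "is_path G p" "n \<le> path_len p"
    using exists_long_path[OF assms] by blast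
  have "inj_on (\<lambda>i. ptake i p) {..n}"
    using p(2) by (intro inj_onI) (metis atMost_iff le_trans length_ptake path_len_def)
  then have "n + 1 = card ((\<lambda>i. ptake i p) ` {..n})"
    by (simp add: card_image)
  also have "\<dots> \<le> card {p. is_path G p \<and> path_len p \<le> n}"
  proof (intro card_mono finite_paths[OF assms(1)] image_subsetI CollectI conjI)
    show "is_path G (ptake i p)" for i
      using p(1) is_path_ptake_pdrop[OF fin_digraph.axioms(1)[OF assms(1)]] by blast
    show "path_len (ptake i p) \<le> n" if "i \<in> {..n}" for i
      using that by (simp add: path_len_def ptake_def)
  qed
  finally show ?thesis .
qed

subsection \<open>Powers of a generating subspace\<close>

lemma subspace_subspace_pow: "ps.subspace (subspace_pow K G V n)"
  by (simp add: subspace_pow_def)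

lemma mono_subspace_pow: "mono (subspace_pow K G V)"
  unfolding subspace_pow_def by (intro monoI ps.span_mono) (blast intro: le_trans)

lemma pprod_mem_subspace_pow:
  "length xs \<le> n \<Longrightarrow> set xs \<subseteq> V \<Longrightarrow> pprod K G xs \<in> subspace_pow K G V n"
  unfolding subspace_pow_def by (rule ps.span_base) blast

lemma pprod_mem_std_filt:
  assumes "fin_digraph G" "V \<subseteq> std_filt K G M" "set xs \<subseteq> V"
  shows "pprod K G xs \<in> std_filt K G (M * length xs)"
  using assms(3)
proof (induction xs)
  case Nil
  then show ?case
    using punit_mem_std_filt[OF assms(1)] by simp
next
  case (Cons x xs)
  then show ?case
    using pmult_mem_std_filt[OF assms(1), of x K M "pprod K G xs"] assms(2) by auto
qed

lemma pprod_mem_path_algebra: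
  "fin_digraph G \<Longrightarrow> set xs \<subseteq> path_algebra K G \<Longrightarrow> pprod K G xs \<in> path_algebra K G"
  by (induction xs)
    (auto simp: path_algebra_eq_UN_std_filt intro: punit_mem_std_filt pmult_mem_std_filt)

lemma pprod_append:
  assumes "fin_digraph G" "set ys \<subseteq> path_algebra K G"
  shows "pmult G (pprod K G xs) (pprod K G ys) = pprod K G (xs @ ys)"
  by (induction xs)
    (simp_all add: pmult_assoc punit_pmult pprod_mem_path_algebra[OF assms])

lemma subspace_pow_subset_std_filt:
  assumes "fin_digraph G" "V \<subseteq> std_filt K G M"
  shows "subspace_pow K G V n \<subseteq> std_filt K G (M * n)"
  unfolding subspace_pow_def
proof (rule ps.span_minimal)
  show "{pprod K G xs |xs. length xs \<le> n \<and> set xs \<subseteq> V} \<subseteq> std_filt K G (M * n)"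
    using pprod_mem_std_filt[OF assms] mono_std_filt[THEN monoD, of "M * length _" "M * n"]
    by fastforce
qed (simp add: std_filt_def)

lemma pmult_mem_if_span:
  fixes x y :: "('v,'e) gpath \<Rightarrow> 'k::field"
  assumes U: "ps.subspace U" and gen: "\<And>s t. s \<in> S \<Longrightarrow> t \<in> T \<Longrightarrow> pmult G s t \<in> U"
    and "x \<in> kspan S" "y \<in> kspan T"
  shows "pmult G x y \<in> U"
proof -
  have "pmult G s y \<in> U" if "s \<in> S" for s
    using \<open>y \<in> kspan T\<close>
  proof (induction rule: ps.span_induct_alt)
    case base
    then show ?case using ps.subspace_0[OF U] by (metis pmult_zero_right)
  next
    case (step c t z)
    then show ?case
      using gen[OF that] ps.subspace_add[OF U] ps.subspace_scale[OF U]
      by (metis pmult_add_right pmult_pscale_right)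
  qed
  with \<open>x \<in> kspan S\<close> show ?thesis
  proof (induction rule: ps.span_induct_alt)
    case base
    then show ?case using ps.subspace_0[OF U] by (metis pmult_zero_left)
  next
    case (step c s z)
    then show ?case
      using ps.subspace_add[OF U] ps.subspace_scale[OF U]
      by (metis pmult_add_left pmult_pscale_left)
  qed
qed

lemma subspace_pow_mult:
  assumes "fin_digraph G" "V \<subseteq> path_algebra K G"
    and "x \<in> subspace_pow K G V a" "y \<in> subspace_pow K G V b"
  shows "pmult G x y \<in> subspace_pow K G V (a + b)"
  using subspace_subspace_pow _ assms(3,4)[unfolded subspace_pow_def]
proof (rule pmult_mem_if_span)
  fix s t assume "s \<in> {pprod K G xs |xs. length xs \<le> a \<and> set xs \<subseteq> V}"
    and "t \<in> {pprod K G ys |ys. length ys \<le> b \<and> set ys \<subseteq> V}"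
  then obtain xs ys where xs: "s = pprod K G xs" "length xs \<le> a" "set xs \<subseteq> V"
    and ys: "t = pprod K G ys" "length ys \<le> b" "set ys \<subseteq> V"
    by blast
  then have "pmult G s t = pprod K G (xs @ ys)"
    using pprod_append[OF assms(1) order.trans[OF ys(3) assms(2)]] xs ys by simp
  also have "\<dots> \<in> subspace_pow K G V (a + b)"
    using xs ys by (intro pprod_mem_subspace_pow) auto
  finally show "pmult G s t \<in> subspace_pow K G V (a + b)" .
qed

lemma subset_subspace_pow_1:
  assumes "fin_digraph G" "V \<subseteq> path_algebra K G"
  shows "V \<subseteq> subspace_pow K G V 1"
proof
  fix x assume "x \<in> V"
  then have "pprod K G [x] \<in> subspace_pow K G V 1"
    by (intro pprod_mem_subspace_pow) auto
  moreover have "pprod K G [x] = x"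
    using \<open>x \<in> V\<close> assms pmult_punit[OF _ fin_digraph.axioms(1)] by auto
  ultimately show "x \<in> subspace_pow K G V 1"
    by simp
qed

lemma std_filt_subset_subspace_pow:
  assumes G: "fin_digraph G" and V: "V \<subseteq> path_algebra K G"
    and k: "std_filt K G 1 \<subseteq> subspace_pow K G V k"
  shows "std_filt K G n \<subseteq> subspace_pow K G V (k * (n + 1))"
proof -
  have wf: "wf_digraph G"
    using G by (rule fin_digraph.axioms(1))
  have basis: "basis_elt K (v, es) \<in> subspace_pow K G V (k * (length es + 1))"
    if "is_path G (v, es)" for v es
    using that
  proof (induction es arbitrary: v)
    case Nil
    then show ?case
      using k basis_elt_mem_std_filt[of G "(v, [])" 1 K] by (auto simp: path_len_def)
  next
    case (Cons e es)
    then have "is_path G (v, [e])" "is_path G (head G e, es)"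
      using is_path_Cons[OF wf] wf_digraph.head_in_verts[OF wf] by auto
    then have "basis_elt K (v, [e]) \<in> subspace_pow K G V k"
      "basis_elt K (head G e, es) \<in> subspace_pow K G V (k * (length es + 1))"
      using k basis_elt_mem_std_filt[of G "(v, [e])" 1 K] Cons.IH by (auto simp: path_len_def)
    from subspace_pow_mult[OF G V this] show ?case
      by (simp add: pmult_basis_elt_arc algebra_simps)
  qed
  have "basis_elt K p \<in> subspace_pow K G V (k * (n + 1))" if "is_path G p" "path_len p \<le> n" for p
  proof -
    have "basis_elt K p \<in> subspace_pow K G V (k * (path_len p + 1))"
      using basis[of "fst p" "snd p"] that(1) by (simp add: path_len_def)
    moreover have "k * (path_len p + 1) \<le> k * (n + 1)"
      using that(2) by simp
    ultimately show ?thesis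
      using mono_subspace_pow[THEN monoD] by blast
  qed
  then show ?thesis
    unfolding std_filt_def by (intro ps.span_minimal[OF _ subspace_subspace_pow]) blast
qed

lemma fd_generating_std_filt_1:
  assumes G: "fin_digraph G"
  shows "fd_generating K G (std_filt K G 1)"
proof -
  let ?V = "std_filt K G 1"
  have V: "?V \<subseteq> path_algebra K G"
    by (auto simp: std_filt_eq)
  have "subspace_pow K G ?V n \<subseteq> path_algebra K G" for n
    using subspace_pow_subset_std_filt[OF G order.refl] by (auto simp: std_filt_eq)
  moreover have "std_filt K G n \<subseteq> subspace_pow K G ?V (1 * (n + 1))" for n
    by (rule std_filt_subset_subspace_pow[OF G V subset_subspace_pow_1[OF G V]])
  ultimately have "(\<Union>n. subspace_pow K G ?V n) = path_algebra K G"
    unfolding path_algebra_eq_UN_std_filt by blast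
  moreover have "finite {basis_elt K p |p. is_path G p \<and> path_len p \<le> 1}"
    using finite_paths[OF G] by (rule finite_image_set)
  ultimately show ?thesis
    using V by (auto simp: fd_generating_def fin_dim_def std_filt_def)
qed

lemma fd_generating_subset_std_filt:
  assumes "fd_generating K G V"
  obtains M where "V \<subseteq> std_filt K G M"
proof -
  obtain B where B: "finite B" "V \<subseteq> kspan B"
    using assms by (auto simp: fd_generating_def fin_dim_def)
  obtain C where C: "C \<subseteq> V" "ps.independent C" "V \<subseteq> kspan C"
    by (rule ps.basis_exists)
  have "finite C"
    using ps.independent_span_bound[OF B(1) C(2)] C(1) B(2) by blast
  moreover have "C \<subseteq> (\<Union>n. std_filt K G n)"
    using C(1) assms by (auto simp: fd_generating_def path_algebra_eq_UN_std_filt)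
  ultimately obtain M where "C \<subseteq> std_filt K G M"
    using mono_std_filt by (rule finite_subset_UN_mono)
  then have "V \<subseteq> std_filt K G M"
    using C(3) ps.span_minimal[of C "std_filt K G M"] by (auto simp: std_filt_def)
  then show ?thesis ..
qed

lemma std_filt_1_subset_subspace_pow:
  assumes "fin_digraph G" "fd_generating K G V"
  obtains k where "std_filt K G 1 \<subseteq> subspace_pow K G V k"
proof -
  let ?B = "{basis_elt K p |p. is_path G p \<and> path_len p \<le> 1}"
  have "finite ?B"
    using finite_paths[OF assms(1)] by (rule finite_image_set)
  moreover have "?B \<subseteq> (\<Union>n. subspace_pow K G V n)"
    using assms(2) basis_elt_mem_std_filt
    by (fastforce simp: fd_generating_def path_algebra_eq_UN_std_filt)
  ultimately obtain k where "?B \<subseteq> subspace_pow K G V k"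
    using mono_subspace_pow by (rule finite_subset_UN_mono)
  then have "std_filt K G 1 \<subseteq> subspace_pow K G V k"
    unfolding std_filt_def by (rule ps.span_minimal[OF _ subspace_subspace_pow])
  then show ?thesis ..
qed

lemma subspace_pow_finite_span:
  assumes "fin_digraph G" "fd_generating K G V"
  obtains F where "finite F" "subspace_pow K G V n \<subseteq> kspan F"
proof -
  obtain M where "V \<subseteq> std_filt K G M"
    using assms(2) by (rule fd_generating_subset_std_filt)
  then have "subspace_pow K G V n \<subseteq> kspan {basis_elt K p |p. is_path G p \<and> path_len p \<le> M * n}"
    using subspace_pow_subset_std_filt[OF assms(1)] by (simp add: std_filt_def)
  moreover have "finite {basis_elt K p |p. is_path G p \<and> path_len p \<le> M * n}"
    using finite_paths[OF assms(1)] by (rule finite_image_set)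
  ultimately show ?thesis
    using that by blast
qed

lemma mono_dim_subspace_pow:
  assumes "fin_digraph G" "fd_generating K G V"
  shows "mono (\<lambda>n. kdim (subspace_pow K G V n))"
proof (rule monoI)
  fix a b :: nat assume "a \<le> b"
  obtain F where "finite F" "subspace_pow K G V b \<subseteq> kspan F"
    using assms by (rule subspace_pow_finite_span)
  moreover have "subspace_pow K G V a \<subseteq> kspan (subspace_pow K G V b)"
    using mono_subspace_pow[THEN monoD, OF \<open>a \<le> b\<close>] ps.span_superset by blast
  ultimately show "kdim (subspace_pow K G V a) \<le> kdim (subspace_pow K G V b)"
    using ps.dim_mono_finite_span by blast
qed

lemma dim_std_filt_le_dim_subspace_pow:
  assumes "fin_digraph G" "fd_generating K G V"
  obtains k where "k > 0" "\<And>n. kdim (std_filt K G n) \<le> kdim (subspace_pow K G V (k * (n + 1)))"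
proof -
  obtain k where "std_filt K G 1 \<subseteq> subspace_pow K G V k"
    using assms by (rule std_filt_1_subset_subspace_pow)
  then have k: "std_filt K G 1 \<subseteq> subspace_pow K G V (Suc k)"
    using mono_subspace_pow[of K G V, THEN monoD, of k "Suc k"] by auto
  have "kdim (std_filt K G n) \<le> kdim (subspace_pow K G V (Suc k * (n + 1)))" for n
  proof -
    obtain F where "finite F" "subspace_pow K G V (Suc k * (n + 1)) \<subseteq> kspan F"
      using assms by (rule subspace_pow_finite_span)
    moreover have "std_filt K G n \<subseteq> kspan (subspace_pow K G V (Suc k * (n + 1)))"
      using std_filt_subset_subspace_pow[OF assms(1) _ k] assms(2) ps.span_superset
      by (fastforce simp: fd_generating_def)
    ultimately show ?thesis
      using ps.dim_mono_finite_span by blast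
  qed
  then show ?thesis
    using that[of "Suc k"] by blast
qed

subsection \<open>Gelfand-Kirillov dimension and entropy of path algebras\<close>

lemma GK_wrt_eq_0_if_fin_dim:
  assumes "fd_generating K G V" "path_algebra_fin_dim K G"
  shows "GK_wrt K G V = 0"
proof -
  obtain B where "finite B" "path_algebra K G \<subseteq> kspan B"
    using assms(2) by (auto simp: path_algebra_fin_dim_def fin_dim_def)
  moreover have "subspace_pow K G V n \<subseteq> path_algebra K G" for n
    using assms(1) by (auto simp: fd_generating_def)
  ultimately have "kdim (subspace_pow K G V n) \<le> card B" for n
    by (meson order.trans ps.dim_le_card)
  then show ?thesis
    unfolding GK_wrt_def by (rule limsup_ln_ratio_eq_0_if_bounded)
qed

lemma GK_wrt_ge_1_if_infinite_dim:
  assumes "fin_digraph G" "fd_generating K G V" "\<not> path_algebra_fin_dim K G"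
  shows "1 \<le> GK_wrt K G V"
proof -
  obtain k where k: "k > 0" "\<And>n. kdim (std_filt K G n) \<le> kdim (subspace_pow K G V (k * (n + 1)))"
    using dim_std_filt_le_dim_subspace_pow[OF assms(1,2)] by blast
  have "n \<le> kdim (subspace_pow K G V (k * n))" for n
  proof (cases n)
    case (Suc m)
    then show ?thesis
      using card_paths_ge[OF assms(1,3), of m] dim_std_filt[OF assms(1), of K m] k(2)[of m] by simp
  qed simp
  with k(1) mono_dim_subspace_pow[OF assms(1,2)] show ?thesis
    unfolding GK_wrt_def by (rule limsup_ln_ratio_ge_1)
qed

lemma h_alg_eq_0_if_GK_wrt_finite:
  assumes "fin_digraph G" "fd_generating K G V" "\<not> path_algebra_fin_dim K G"
    and "GK_wrt K G V < \<infinity>"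
  shows "h_alg K G = 0"
proof -
  obtain k where k: "k > 0" "\<And>n. kdim (std_filt K G n) \<le> kdim (subspace_pow K G V (k * (n + 1)))"
    using dim_std_filt_le_dim_subspace_pow[OF assms(1,2)] by blast
  have "filt_quot_dim K G n \<le> kdim (subspace_pow K G V (k * (n + 1)))" for n
    using k(2)[of n] by (auto simp: filt_quot_dim_def intro: le_trans[OF diff_le_self])
  with assms(3,4) k(1) show ?thesis
    unfolding GK_wrt_def h_alg_def by (simp add: limsup_ln_over_n_eq_0)
qed

theorem theorem5p13:
  fixes G :: "('v,'e) pre_digraph"
  assumes "fin_digraph G"
  shows "(GKdim TYPE('k::field) G = 0 \<longleftrightarrow> path_algebra_fin_dim TYPE('k) G)
    \<and> (GKdim TYPE('k) G \<noteq> 0 \<and> GKdim TYPE('k) G < \<infinity>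
         \<longrightarrow> h_alg TYPE('k) G = 0 \<and> \<not> path_algebra_fin_dim TYPE('k) G)"
proof -
  define V where "V = (SOME V. fd_generating TYPE('k) G V)"
  have V: "fd_generating TYPE('k) G V"
    unfolding V_def using fd_generating_std_filt_1[OF assms] by (rule someI)
  have GK: "GKdim TYPE('k) G = GK_wrt TYPE('k) G V"
    by (simp add: GKdim_def V_def)
  show ?thesis
  proof (cases "path_algebra_fin_dim TYPE('k) G")
    case True
    then show ?thesis
      using GK_wrt_eq_0_if_fin_dim[OF V] GK by simp
  next
    case False
    then have "GKdim TYPE('k) G \<noteq> 0"
      using GK_wrt_ge_1_if_infinite_dim[OF assms V] GK by auto
    moreover have "h_alg TYPE('k) G = 0" if "GKdim TYPE('k) G < \<infinity>"
      using h_alg_eq_0_if_GK_wrt_finite[OF assms V False] that GK by simp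
    ultimately show ?thesis
      using False by auto
  qed
qed

end
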